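(* Let $w=w_1\cdots w_n$ be a word of length $n\ge 2$ using only two letters, such that $w_i\ne w_{n-i+1}$ for all $1\le i\le n$. Then for every positive integer $d$, $f(w,d)=\frac14\left((n+2)^d-(n-2)^d\right)$.
   Context: Let $[n]=\{1,\dots,n\}$, $n\ge 2$, $d\ge 1$. For $p\in[n]^d$ and $v\in\{-1,0,1\}^d$ with $v\ne\vec 0$, if $p+tv\in[n]^d$ for all $0\le t\le n-1$, the set $\ell=\{p,p+v,\dots,p+(n-1)v\}$ is called a line (with initial point $p$ and direction $v$). Each line has a unique representation $(p;v)$ in which the first nonzero coordinate of $v$ is $+1$ (its canonical pair); for such a representation write $\ell_i=p+(i-1)v$ for $1\le i\le n$. An $(n,d)$-grid is a function $G:[n]^d\to\Sigma$ for an arbitrary set of letters $\Sigma$. For a word $w=w_1\cdots w_n$, a line $\ell$ contains $w$ if $G(\ell_1)G(\ell_2)\cdots G(\ell_n)=w$ or $G(\ell_n)\cdots G(\ell_1)=w$. $f(w,G)$ is the number of lines of $[n]^d$ containing $w$, and $f(w,d)=\max_G f(w,G)$ over all $(n,d)$-grids $G$. *)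

theory Defs
  imports Complex_Main
begin

definition cube :: "nat \<Rightarrow> nat \<Rightarrow> int list set" where
  "cube n d = {p. length p = d \<and> (\<forall>x\<in>set p. 1 \<le> x \<and> x \<le> int n)}"

definition dirs :: "nat \<Rightarrow> int list set" where
  "dirs d = {v. length v = d \<and> set v \<subseteq> {-1, 0, 1} \<and> (\<exists>x\<in>set v. x \<noteq> 0)}"

definition canon :: "int list \<Rightarrow> bool" where
  "canon v \<longleftrightarrow> (\<exists>i<length v. v ! i = 1 \<and> (\<forall>j<i. v ! j = 0))"

definition lpt :: "int list \<Rightarrow> int list \<Rightarrow> nat \<Rightarrow> int list" where
  "lpt p v t = map (\<lambda>(a, b). a + int t * b) (zip p v)"

definition valid_line :: "nat \<Rightarrow> nat \<Rightarrow> int list \<Rightarrow> int list \<Rightarrow> bool" where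
  "valid_line n d p v \<longleftrightarrow> p \<in> cube n d \<and> v \<in> dirs d \<and> (\<forall>t\<le>n - 1. lpt p v t \<in> cube n d)"

definition line_set :: "nat \<Rightarrow> int list \<Rightarrow> int list \<Rightarrow> int list set" where
  "line_set n p v = {lpt p v t | t. t < n}"

definition line_word :: "(int list \<Rightarrow> 'a) \<Rightarrow> nat \<Rightarrow> int list \<Rightarrow> int list \<Rightarrow> 'a list" where
  "line_word G n p v = map (\<lambda>t. G (lpt p v t)) [0..<n]"

text \<open>Lines of [n]^d (n = length w) containing w in grid G; a line is identified with its
  point set and read via its canonical pair (p;v).\<close>
definition lines_containing :: "'a list \<Rightarrow> (int list \<Rightarrow> 'a) \<Rightarrow> nat \<Rightarrow> int list set set" where
  "lines_containing w G d =
     {L. \<exists>p v. valid_line (length w) d p v \<and> canon v \<and> L = line_set (length w) p v \<and>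
              (line_word G (length w) p v = w \<or> rev (line_word G (length w) p v) = w)}"

definition f_grid :: "'a list \<Rightarrow> (int list \<Rightarrow> 'a) \<Rightarrow> nat \<Rightarrow> nat" where
  "f_grid w G d = card (lines_containing w G d)"

definition f_max :: "'a list \<Rightarrow> nat \<Rightarrow> nat" where
  "f_max w d = Max {f_grid w G d | G. True}"

end

theory Submission
  imports Defs
begin

(* Colour a point x of [n]^d by the parity of the number of coordinates x_i with w_(x_i) different
   from w_1. Along a line, a coordinate running upwards reads w, and a coordinate running downwards
   reads the mirror image of w, which for a binary antipalindrome is the complement of w. Hence a
   line with an odd number of moving coordinates reads w or its complement, i.e. w or its reversal,
   and there are ((n+2)^d - (n-2)^d)/4 such lines.
   Conversely, a line containing w is determined by its endpoints, one coloured w_1 and the other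
   w_n, and two endpoints of a line agree in every coordinate in which they are not both extreme
   (1 or n). Counting such pairs of points is a bilinear form on the colour classes; an induction on
   d that merges the extreme values of the first coordinate bounds it by the same number. *)

section \<open>Lines in coordinates\<close>

lemma length_lpt [simp]: "length (lpt p v t) = min (length p) (length v)"
  by (simp add: lpt_def)

lemma nth_lpt: "i < length p \<Longrightarrow> i < length v \<Longrightarrow> lpt p v t ! i = p ! i + int t * v ! i"
  by (simp add: lpt_def)

lemma lpt_Cons [simp]: "lpt (c # p) (e # v) t = (c + int t * e) # lpt p v t"
  by (simp add: lpt_def)

lemma lpt_Nil [simp]: "lpt [] v t = []"
  by (simp add: lpt_def)

lemma lpt_0: "length p = length v \<Longrightarrow> lpt p v 0 = p"
  by (induct p v rule: list_induct2) simp_all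

lemma lpt_lpt_reverse: "t \<le> m \<Longrightarrow> lpt (lpt p v m) (map uminus v) t = lpt p v (m - t)"
  by (rule nth_equalityI) (auto simp: lpt_def nth_lpt of_nat_diff algebra_simps)

lemma mem_line_set_iff: "x \<in> line_set n p v \<longleftrightarrow> (\<exists>t<n. x = lpt p v t)"
  by (auto simp: line_set_def)

lemma lpt_in_line_set: "t < n \<Longrightarrow> lpt p v t \<in> line_set n p v"
  by (auto simp: line_set_def)

lemma line_set_reverse:
  assumes "0 < n"
  shows "line_set n (lpt p v (n - 1)) (map uminus v) = line_set n p v"
proof -
  have rev: "lpt (lpt p v (n - 1)) (map uminus v) t = lpt p v (n - 1 - t)" if "t < n" for t
    using that lpt_lpt_reverse[of t "n - 1" p v] by simp
  show ?thesis
  proof (intro set_eqI iffI)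
    fix x assume "x \<in> line_set n (lpt p v (n - 1)) (map uminus v)"
    then obtain t where "t < n" "x = lpt p v (n - 1 - t)"
      unfolding mem_line_set_iff using rev by blast
    then show "x \<in> line_set n p v"
      by (auto simp: mem_line_set_iff intro!: exI[of _ "n - 1 - t"])
  next
    fix x assume "x \<in> line_set n p v"
    then obtain t where t: "t < n" "x = lpt p v t" by (auto simp: mem_line_set_iff)
    then have "x = lpt (lpt p v (n - 1)) (map uminus v) (n - 1 - t)"
      using rev[of "n - 1 - t"] by simp
    then show "x \<in> line_set n (lpt p v (n - 1)) (map uminus v)"
      using assms by (auto simp: mem_line_set_iff intro!: exI[of _ "n - 1 - t"])
  qed
qed

lemma map2_sgn_lpt:
  assumes "set v \<subseteq> {-1, 0, 1}" and "length p = length v" and "0 < m"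
  shows "map2 (\<lambda>a b. sgn (b - a)) p (lpt p v m) = v"
proof (rule nth_equalityI)
  fix i assume "i < length (map2 (\<lambda>a b. sgn (b - a)) p (lpt p v m))"
  then have "i < length v" using assms(2) by simp
  moreover from this have "v ! i \<in> {-1, 0, 1}" using assms(1) nth_mem by blast
  ultimately show "map2 (\<lambda>a b. sgn (b - a)) p (lpt p v m) ! i = v ! i"
    using assms(2,3) by (auto simp: nth_lpt sgn_mult)
qed (use assms(2) in simp)

lemma cube_iff_nth: "p \<in> cube n d \<longleftrightarrow> length p = d \<and> (\<forall>i<d. 1 \<le> p ! i \<and> p ! i \<le> int n)"
  unfolding cube_def by (auto simp: all_set_conv_all_nth)

lemma dirs_iff_nth:
  "v \<in> dirs d \<longleftrightarrow> length v = d \<and> (\<forall>i<d. v ! i \<in> {-1, 0, 1}) \<and> (\<exists>i<d. v ! i \<noteq> 0)"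
  unfolding dirs_def by (auto simp: all_set_conv_all_nth in_set_conv_nth subset_iff) (metis nth_mem)

definition line_coord :: "nat \<Rightarrow> int \<Rightarrow> int \<Rightarrow> bool" where
  "line_coord n c e \<longleftrightarrow> (e = 0 \<and> 1 \<le> c \<and> c \<le> int n) \<or> (e = 1 \<and> c = 1) \<or> (e = -1 \<and> c = int n)"

lemma valid_line_iff:
  assumes "n \<ge> 2"
  shows "valid_line n d p v \<longleftrightarrow>
    length p = d \<and> length v = d \<and> (\<exists>i<d. v ! i \<noteq> 0) \<and> (\<forall>i<d. line_coord n (p ! i) (v ! i))"
proof
  assume "valid_line n d p v"
  then have p: "p \<in> cube n d" and v: "v \<in> dirs d" and q: "lpt p v (n - 1) \<in> cube n d"
    by (auto simp: valid_line_def)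
  have "line_coord n (p ! i) (v ! i)" if "i < d" for i
  proof -
    have "1 \<le> p ! i" "p ! i \<le> int n" "v ! i \<in> {-1, 0, 1}"
      using p v that by (auto simp: cube_iff_nth dirs_iff_nth)
    moreover have "1 \<le> p ! i + (int n - 1) * v ! i" "p ! i + (int n - 1) * v ! i \<le> int n"
      using p v q that assms by (auto simp: cube_iff_nth dirs_iff_nth nth_lpt of_nat_diff)
    ultimately show ?thesis
      using assms unfolding line_coord_def by auto
  qed
  then show "length p = d \<and> length v = d \<and> (\<exists>i<d. v ! i \<noteq> 0) \<and> (\<forall>i<d. line_coord n (p ! i) (v ! i))"
    using p v by (auto simp: cube_iff_nth dirs_iff_nth)
next
  assume H: "length p = d \<and> length v = d \<and> (\<exists>i<d. v ! i \<noteq> 0) \<and> (\<forall>i<d. line_coord n (p ! i) (v ! i))"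
  have "lpt p v t \<in> cube n d" if "t \<le> n - 1" for t
  proof -
    have "1 \<le> p ! i + int t * v ! i \<and> p ! i + int t * v ! i \<le> int n" if "i < d" for i
      using H \<open>i < d\<close> \<open>t \<le> n - 1\<close> assms unfolding line_coord_def by auto
    then show ?thesis
      using H by (auto simp: cube_iff_nth nth_lpt)
  qed
  moreover have "p \<in> cube n d" "v \<in> dirs d"
    using H assms by (auto simp: cube_iff_nth dirs_iff_nth line_coord_def)
  ultimately show "valid_line n d p v"
    by (simp add: valid_line_def)
qed

lemma line_set_eq_imp_dir_zero:
  assumes "n \<ge> 2" "valid_line n d p v" "valid_line n d p' v'"
    and "line_set n p v = line_set n p' v'" and "j < d" and "v' ! j = 0"
  shows "v ! j = 0"
proof -
  have len: "length p = d" "length v = d" "length p' = d" "length v' = d"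
    using assms(1-3) by (auto simp: valid_line_iff)
  have "lpt p v 0 \<in> line_set n p' v'" "lpt p v 1 \<in> line_set n p' v'"
    using assms(1) lpt_in_line_set[of 0 n p v] lpt_in_line_set[of 1 n p v] by (simp_all add: assms(4))
  then obtain t0 t1 where "lpt p v 0 = lpt p' v' t0" "lpt p v 1 = lpt p' v' t1"
    by (auto simp: mem_line_set_iff)
  then have "lpt p v 0 ! j = lpt p' v' t0 ! j" "lpt p v 1 ! j = lpt p' v' t1 ! j"
    by simp_all
  then show ?thesis
    using len assms(5,6) by (simp add: nth_lpt)
qed

lemma canon_common_leading_one:
  assumes "canon v" and "canon v'" and "length v = length v'"
    and "\<forall>j<length v. v ! j = 0 \<longleftrightarrow> v' ! j = 0"
  shows "\<exists>i<length v. v ! i = 1 \<and> v' ! i = 1"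
proof -
  obtain i where i: "i < length v" "v ! i = 1" "\<forall>j<i. v ! j = 0"
    using assms(1) by (auto simp: canon_def)
  obtain i' where i': "i' < length v" "v' ! i' = 1" "\<forall>j<i'. v' ! j = 0"
    using assms(2,3) by (auto simp: canon_def)
  have "i = i'"
  proof (cases i i' rule: linorder_cases)
    case less
    with i i' assms(4)[rule_format, of i] show ?thesis by simp
  next
    case greater
    with i i' assms(4)[rule_format, of i'] show ?thesis by simp
  qed
  with i i' show ?thesis by auto
qed

lemma inj_on_line_set:
  assumes n: "n \<ge> 2"
  shows "inj_on (\<lambda>(p, v). line_set n p v) {(p, v). valid_line n d p v \<and> canon v}"
proof (intro inj_onI, clarsimp)
  fix p v p' v'
  assume V: "valid_line n d p v" "canon v" and V': "valid_line n d p' v'" "canon v'"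
    and E: "line_set n p v = line_set n p' v'"
  have len: "length p = d" "length v = d" "length p' = d" "length v' = d"
    using V V' n by (auto simp: valid_line_iff)
  have Z: "v ! j = 0 \<longleftrightarrow> v' ! j = 0" if "j < d" for j
    using line_set_eq_imp_dir_zero[OF n V(1) V'(1) E that]
      line_set_eq_imp_dir_zero[OF n V'(1) V(1) E[symmetric] that] by blast
  obtain i where i: "i < d" "v ! i = 1" "v' ! i = 1"
    using canon_common_leading_one[OF V(2) V'(2)] Z len by auto
  have "line_coord n (p ! i) (v ! i)" "line_coord n (p' ! i) (v' ! i)"
    using V(1) V'(1) i(1) n by (simp_all add: valid_line_iff)
  then have start: "p ! i = 1" "p' ! i = 1"
    using i by (simp_all add: line_coord_def)
  \<comment> \<open>both lines start at the point whose first moving coordinate is 1, and take the same first step\<close>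
  have "lpt p v 0 \<in> line_set n p' v'" "lpt p v 1 \<in> line_set n p' v'"
    using n lpt_in_line_set[of 0 n p v] lpt_in_line_set[of 1 n p v] by (simp_all add: E)
  then obtain t s where t: "lpt p v 0 = lpt p' v' t" and s: "lpt p v 1 = lpt p' v' s"
    by (auto simp: mem_line_set_iff)
  from arg_cong[OF t, of "\<lambda>x. x ! i"] have "t = 0"
    using start i len by (simp add: nth_lpt)
  then have "p = p'"
    using t len by (simp add: lpt_0)
  from arg_cong[OF s, of "\<lambda>x. x ! i"] have "s = 1"
    using start i len by (simp add: nth_lpt)
  have "v = v'"
  proof (rule nth_equalityI)
    fix j assume "j < length v"
    with arg_cong[OF s, of "\<lambda>x. x ! j"] show "v ! j = v' ! j"
      using \<open>s = 1\<close> \<open>p = p'\<close> len by (simp add: nth_lpt)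
  qed (use len in simp)
  with \<open>p = p'\<close> show "p = p' \<and> v = v'" by simp
qed

definition line_through :: "nat \<Rightarrow> int list \<Rightarrow> int list \<Rightarrow> int list set" where
  "line_through n x y = line_set n x (map2 (\<lambda>a b. sgn (b - a)) x y)"

lemma line_through_endpoints:
  assumes "n \<ge> 2" and "valid_line n d p v"
  shows "line_through n p (lpt p v (n - 1)) = line_set n p v"
    and "line_through n (lpt p v (n - 1)) p = line_set n p v"
proof -
  have v: "set v \<subseteq> {-1, 0, 1}" and len: "length p = length v"
    using assms(2) by (auto simp: valid_line_def dirs_def cube_def)
  show "line_through n p (lpt p v (n - 1)) = line_set n p v"
    using map2_sgn_lpt[OF v len] assms(1) by (simp add: line_through_def)
  have "lpt (lpt p v (n - 1)) (map uminus v) (n - 1) = p"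
    using lpt_lpt_reverse[of "n - 1" "n - 1" p v] len by (simp add: lpt_0)
  moreover have "map2 (\<lambda>a b. sgn (b - a)) (lpt p v (n - 1))
      (lpt (lpt p v (n - 1)) (map uminus v) (n - 1)) = map uminus v"
    using v len assms(1) by (intro map2_sgn_lpt) auto
  ultimately show "line_through n (lpt p v (n - 1)) p = line_set n p v"
    using line_set_reverse[of n p v] assms(1) by (simp add: line_through_def)
qed

lemma length_line_word [simp]: "length (line_word G n p v) = n"
  by (simp add: line_word_def)

lemma nth_line_word: "t < n \<Longrightarrow> line_word G n p v ! t = G (lpt p v t)"
  by (simp add: line_word_def)

lemma finite_cube: "finite (cube n d)"
proof -
  have "cube n d \<subseteq> {xs. set xs \<subseteq> {1..int n} \<and> length xs = d}"
    by (auto simp: cube_def)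
  then show ?thesis
    using finite_lists_length_eq[of "{1..int n}" d] finite_subset by auto
qed

lemma finite_lines_containing: "finite (lines_containing w G d)"
proof (rule finite_subset)
  show "lines_containing w G d \<subseteq> Pow (cube (length w) d)"
    by (force simp: lines_containing_def valid_line_def mem_line_set_iff)
qed (simp add: finite_cube)

lemma f_max_eqI:
  assumes "\<And>G. f_grid w G d \<le> m" and "f_grid w G\<^sub>0 d = m"
  shows "f_max w d = m"
  unfolding f_max_def
proof (rule Max_eqI)
  have "{f_grid w G d |G. True} \<subseteq> {..m}"
    using assms(1) by auto
  then show "finite {f_grid w G d |G. True}"
    by (rule finite_subset) simp
  show "m \<in> {f_grid w G d |G. True}"
    using assms(2) by blast
qed (use assms(1) in blast)

section \<open>Lines with an odd number of moving coordinates\<close>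

definition num_moving :: "int list \<Rightarrow> nat" where
  "num_moving v = length (filter (\<lambda>x. x \<noteq> 0) v)"

(* Enumerations, by the first coordinate, of the pairs (p, v) satisfying line_coord coordinatewise
   with odd (num_moving v) = b, and of those with v canonical and an odd number of moving
   coordinates; a canonical v has its first moving coordinate +1, starting at 1. *)

fun line_pairs :: "nat \<Rightarrow> nat \<Rightarrow> bool \<Rightarrow> (int list \<times> int list) set" where
  "line_pairs n 0 b = (if b then {} else {([], [])})"
| "line_pairs n (Suc d) b =
     (\<lambda>(c, p, v). (c # p, 0 # v)) ` ({1..int n} \<times> line_pairs n d b)
     \<union> (\<lambda>(p, v). (1 # p, 1 # v)) ` line_pairs n d (\<not> b)
     \<union> (\<lambda>(p, v). (int n # p, -1 # v)) ` line_pairs n d (\<not> b)"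

fun odd_canon_pairs :: "nat \<Rightarrow> nat \<Rightarrow> (int list \<times> int list) set" where
  "odd_canon_pairs n 0 = {}"
| "odd_canon_pairs n (Suc d) =
     (\<lambda>(c, p, v). (c # p, 0 # v)) ` ({1..int n} \<times> odd_canon_pairs n d)
     \<union> (\<lambda>(p, v). (1 # p, 1 # v)) ` line_pairs n d False"

lemma finite_line_pairs: "finite (line_pairs n d b)"
  by (induct d arbitrary: b) auto

lemma finite_odd_canon_pairs: "finite (odd_canon_pairs n d)"
  by (induct d) (auto simp: finite_line_pairs)

lemma line_coord_simps [simp]:
  "line_coord n c 0 \<longleftrightarrow> 1 \<le> c \<and> c \<le> int n" "line_coord n 1 1" "line_coord n (int n) (-1)"
  by (auto simp: line_coord_def)

lemma mem_line_pairsD: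
  "(p, v) \<in> line_pairs n d b \<Longrightarrow>
    length p = d \<and> list_all2 (line_coord n) p v \<and> odd (num_moving v) = b"
proof (induct d arbitrary: b p v)
  case (Suc d)
  from Suc.prems show ?case
    by (auto simp: num_moving_def dest!: Suc.hyps)
qed (simp add: num_moving_def split: if_splits)

lemma canon_Cons_0: "canon (0 # v) \<longleftrightarrow> canon v"
proof
  assume "canon (0 # v)"
  then obtain i where i: "i < Suc (length v)" "(0 # v) ! i = 1" "\<forall>j<i. (0 # v) ! j = 0"
    by (auto simp: canon_def)
  then obtain k where "i = Suc k" by (cases i) auto
  with i show "canon v"
    unfolding canon_def by (intro exI[of _ k]) (auto dest: spec[of _ "Suc _"])
next
  assume "canon v"
  then obtain i where "i < length v" "v ! i = 1" "\<forall>j<i. v ! j = 0" by (auto simp: canon_def)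
  then show "canon (0 # v)"
    unfolding canon_def by (intro exI[of _ "Suc i"]) (auto simp: less_Suc_eq_0_disj)
qed

lemma canon_Cons_1: "canon (1 # v)"
  by (auto simp: canon_def)

lemma mem_odd_canon_pairsD:
  "(p, v) \<in> odd_canon_pairs n d \<Longrightarrow>
    length p = d \<and> list_all2 (line_coord n) p v \<and> odd (num_moving v) \<and> canon v"
proof (induct d arbitrary: p v)
  case (Suc d)
  from Suc.prems show ?case
    by (auto simp: num_moving_def canon_Cons_0 canon_Cons_1 dest!: Suc.hyps mem_line_pairsD)
qed simp

lemma odd_canon_pairs_valid_line:
  assumes "n \<ge> 2" and "(p, v) \<in> odd_canon_pairs n d"
  shows "valid_line n d p v \<and> canon v"
proof -
  have M: "length p = d" "list_all2 (line_coord n) p v" "odd (num_moving v)" "canon v"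
    using mem_odd_canon_pairsD[OF assms(2)] by auto
  then have "length v = d"
    by (simp add: list_all2_lengthD)
  moreover have "filter (\<lambda>x. x \<noteq> 0) v \<noteq> []"
    using M(3) by (auto simp: num_moving_def)
  then have "\<exists>i<d. v ! i \<noteq> 0"
    using \<open>length v = d\<close> by (auto simp: filter_empty_conv in_set_conv_nth)
  ultimately show ?thesis
    using M assms(1) by (auto simp: valid_line_iff list_all2_conv_all_nth)
qed

lemma card_image_Cons_pair: "card ((\<lambda>(p, v). (c # p, e # v)) ` A) = card A"
  by (rule card_image) (auto simp: inj_on_def)

lemma card_image_Cons_prod: "card ((\<lambda>(c, p, v). (c # p, e # v)) ` (C \<times> A)) = card C * card A"
  by (subst card_image) (auto simp: inj_on_def card_cartesian_product)

lemma card_line_pairs_Suc: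
  "card (line_pairs n (Suc d) b) = n * card (line_pairs n d b) + 2 * card (line_pairs n d (\<not> b))"
  by (subst line_pairs.simps, subst card_Un_disjoint, (auto simp: finite_line_pairs)[3],
      subst card_Un_disjoint, (auto simp: finite_line_pairs)[3])
    (simp add: card_image_Cons_pair card_image_Cons_prod)

lemma card_odd_canon_pairs_Suc:
  "card (odd_canon_pairs n (Suc d)) = n * card (odd_canon_pairs n d) + card (line_pairs n d False)"
  by (subst odd_canon_pairs.simps, subst card_Un_disjoint,
      (auto simp: finite_line_pairs finite_odd_canon_pairs)[3])
    (simp add: card_image_Cons_pair card_image_Cons_prod)

lemma two_card_line_pairs:
  "2 * int (card (line_pairs n d b)) = (int n + 2) ^ d + (if b then -1 else 1) * (int n - 2) ^ d"
proof (induct d arbitrary: b)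
  case (Suc d)
  have "2 * int (card (line_pairs n (Suc d) b)) =
      int n * (2 * int (card (line_pairs n d b))) + 2 * (2 * int (card (line_pairs n d (\<not> b))))"
    unfolding card_line_pairs_Suc by simp
  also have "\<dots> = (int n + 2) ^ Suc d + (if b then -1 else 1) * (int n - 2) ^ Suc d"
    unfolding Suc by (cases b) (simp_all add: algebra_simps)
  finally show ?case .
qed simp

lemma four_card_odd_canon_pairs:
  "4 * int (card (odd_canon_pairs n d)) = (int n + 2) ^ d - (int n - 2) ^ d"
proof (induct d)
  case (Suc d)
  have "4 * int (card (odd_canon_pairs n (Suc d))) =
      int n * (4 * int (card (odd_canon_pairs n d))) + 2 * (2 * int (card (line_pairs n d False)))"
    unfolding card_odd_canon_pairs_Suc by simp
  also have "\<dots> = (int n + 2) ^ Suc d - (int n - 2) ^ Suc d"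
    unfolding Suc two_card_line_pairs by (simp add: algebra_simps)
  finally show ?case .
qed simp

section \<open>Pairs of aligned points\<close>

lemma cube_0 [simp]: "cube n 0 = {[]}"
  by (auto simp: cube_def)

lemma cube_Suc: "cube n (Suc d) = (\<lambda>(c, x). c # x) ` ({1..int n} \<times> cube n d)"
proof (intro set_eqI iffI)
  fix p assume "p \<in> cube n (Suc d)"
  then show "p \<in> (\<lambda>(c, x). c # x) ` ({1..int n} \<times> cube n d)"
    by (cases p) (auto simp: cube_def)
qed (auto simp: cube_def)

lemma sum_cube_Suc: "(\<Sum>x\<in>cube n (Suc d). f x) = (\<Sum>c\<in>{1..int n}. \<Sum>x\<in>cube n d. f (c # x))"
  by (simp add: cube_Suc sum.reindex inj_on_def sum.cartesian_product split_def)

(* The two endpoints of a line agree in every coordinate in which they are not both extreme. *)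

definition aligned_coord :: "int \<Rightarrow> int \<Rightarrow> int \<Rightarrow> bool" where
  "aligned_coord N c c' \<longleftrightarrow> c = c' \<or> (c \<in> {1, N} \<and> c' \<in> {1, N})"

abbreviation aligned :: "int \<Rightarrow> int list \<Rightarrow> int list \<Rightarrow> bool" where
  "aligned N \<equiv> list_all2 (aligned_coord N)"

definition aligned_form :: "nat \<Rightarrow> nat \<Rightarrow> (int list \<Rightarrow> int) \<Rightarrow> (int list \<Rightarrow> int) \<Rightarrow> int" where
  "aligned_form n d \<alpha> \<beta> =
    (\<Sum>x\<in>cube n d. \<Sum>y\<in>cube n d. if aligned (int n) x y then \<alpha> x * \<beta> y else 0)"

lemma aligned_endpoints:
  assumes "n \<ge> 2" and "valid_line n d p v"
  shows "aligned (int n) p (lpt p v (n - 1)) \<and> aligned (int n) (lpt p v (n - 1)) p"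
proof -
  have len: "length p = d" "length v = d" and coord: "\<forall>i<d. line_coord n (p ! i) (v ! i)"
    using assms by (auto simp: valid_line_iff)
  have "aligned_coord (int n) (p ! i) (p ! i + int (n - 1) * v ! i)
      \<and> aligned_coord (int n) (p ! i + int (n - 1) * v ! i) (p ! i)" if "i < d" for i
    using coord that assms(1) by (auto simp: line_coord_def aligned_coord_def of_nat_diff)
  then show ?thesis
    using len by (auto simp: list_all2_conv_all_nth nth_lpt)
qed

lemma aligned_form_add:
  "aligned_form n d (\<lambda>x. \<alpha>\<^sub>1 x + \<alpha>\<^sub>2 x) (\<lambda>y. \<beta>\<^sub>1 y + \<beta>\<^sub>2 y) =
    aligned_form n d \<alpha>\<^sub>1 \<beta>\<^sub>1 + aligned_form n d \<alpha>\<^sub>1 \<beta>\<^sub>2 + aligned_form n d \<alpha>\<^sub>2 \<beta>\<^sub>1 + aligned_form n d \<alpha>\<^sub>2 \<beta>\<^sub>2"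
  unfolding aligned_form_def
  by (simp add: sum.distrib[symmetric] algebra_simps if_distrib cong: if_cong)

lemma sum_split_extremes:
  fixes N :: int
  assumes "2 \<le> N"
  shows "(\<Sum>c\<in>{1..N}. f c) = f 1 + f N + (\<Sum>c\<in>{2..N - 1}. f c)"
proof -
  have "{1..N} = insert 1 (insert N {2..N - 1})"
    using assms by auto
  then show ?thesis
    using assms by (simp add: add.assoc)
qed

lemma sum_aligned_coord:
  fixes N :: int
  assumes "2 \<le> N" and "c \<in> {1..N}"
  shows "(\<Sum>c'\<in>{1..N}. if aligned_coord N c c' then f c' else 0) =
    (if c \<in> {1, N} then f 1 + f N else f c)"
proof -
  have "(\<Sum>c'\<in>{1..N}. if aligned_coord N c c' then f c' else 0) =
      (if aligned_coord N c 1 then f 1 else 0) + (if aligned_coord N c N then f N else 0)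
      + (\<Sum>c'\<in>{2..N - 1}. if aligned_coord N c c' then f c' else 0)"
    by (rule sum_split_extremes[OF assms(1)])
  also have "(\<Sum>c'\<in>{2..N - 1}. if aligned_coord N c c' then f c' else 0) =
      (\<Sum>c'\<in>{2..N - 1}. if c' = c then f c' else 0)"
    by (intro sum.cong) (auto simp: aligned_coord_def)
  finally show ?thesis
    using assms by (auto simp: aligned_coord_def)
qed

lemma aligned_form_Suc:
  assumes "n \<ge> 2"
  shows "aligned_form n (Suc d) \<alpha> \<beta> =
    (\<Sum>c\<in>{2..int n - 1}. aligned_form n d (\<lambda>x. \<alpha> (c # x)) (\<lambda>y. \<beta> (c # y)))
    + aligned_form n d (\<lambda>x. \<alpha> (1 # x) + \<alpha> (int n # x)) (\<lambda>y. \<beta> (1 # y) + \<beta> (int n # y))"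
proof -
  define T where "T c c' = aligned_form n d (\<lambda>x. \<alpha> (c # x)) (\<lambda>y. \<beta> (c' # y))" for c c'
  have N: "2 \<le> int n"
    using assms by simp
  have "aligned_form n (Suc d) \<alpha> \<beta> = (\<Sum>c\<in>{1..int n}. \<Sum>x\<in>cube n d. \<Sum>c'\<in>{1..int n}. \<Sum>y\<in>cube n d.
      if aligned_coord (int n) c c' \<and> aligned (int n) x y then \<alpha> (c # x) * \<beta> (c' # y) else 0)"
    by (simp add: aligned_form_def sum_cube_Suc)
  also have "\<dots> = (\<Sum>c\<in>{1..int n}. \<Sum>c'\<in>{1..int n}. \<Sum>x\<in>cube n d. \<Sum>y\<in>cube n d.
      if aligned_coord (int n) c c' \<and> aligned (int n) x y then \<alpha> (c # x) * \<beta> (c' # y) else 0)"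
    by (intro sum.cong refl sum.swap)
  also have "\<dots> = (\<Sum>c\<in>{1..int n}. \<Sum>c'\<in>{1..int n}. if aligned_coord (int n) c c' then T c c' else 0)"
    by (intro sum.cong refl) (simp add: T_def aligned_form_def)
  also have "\<dots> = (\<Sum>c\<in>{1..int n}. if c \<in> {1, int n} then T c 1 + T c (int n) else T c c)"
    by (rule sum.cong[OF refl], rule sum_aligned_coord[OF N])
  also have "\<dots> = T 1 1 + T 1 (int n) + (T (int n) 1 + T (int n) (int n))
      + (\<Sum>c\<in>{2..int n - 1}. if c \<in> {1, int n} then T c 1 + T c (int n) else T c c)"
    using N by (subst sum_split_extremes) simp_all
  also have "(\<Sum>c\<in>{2..int n - 1}. if c \<in> {1, int n} then T c 1 + T c (int n) else T c c) =
      (\<Sum>c\<in>{2..int n - 1}. T c c)"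
    by (intro sum.cong) auto
  finally show ?thesis
    unfolding aligned_form_add T_def by simp
qed

lemma four_mul_le_sq:
  fixes a b k :: int
  assumes "0 \<le> a" and "0 \<le> b" and "a + b \<le> k"
  shows "4 * (a * b) + k\<^sup>2 mod 4 \<le> k\<^sup>2"
proof -
  have "4 * (a * b) \<le> (a + b)\<^sup>2"
    using zero_le_power2[of "a - b"] by (simp add: power2_eq_square algebra_simps)
  also have "(a + b)\<^sup>2 \<le> k\<^sup>2"
    using assms by (intro power_mono) auto
  finally have "(k\<^sup>2 - 4 * (a * b)) mod 4 \<le> k\<^sup>2 - 4 * (a * b)"
    by (intro zmod_le_nonneg_dividend) simp
  moreover have "(k\<^sup>2 - 4 * (a * b)) mod 4 = k\<^sup>2 mod 4"
    by (simp add: mod_diff_eq[symmetric])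
  ultimately show ?thesis
    by linarith
qed

(* For k = 1 this bounds the number of aligned pairs of points in two disjoint colour classes;
   the k\<^sup>2 mod 4 term is what survives the induction, in which k doubles. *)

lemma aligned_form_bound:
  assumes "n \<ge> 2" and "\<forall>x\<in>cube n d. 0 \<le> \<alpha> x \<and> 0 \<le> \<beta> x \<and> \<alpha> x + \<beta> x \<le> k"
  shows "4 * aligned_form n d \<alpha> \<beta> + (k\<^sup>2 mod 4) * (int n - 2) ^ d \<le> k\<^sup>2 * (int n + 2) ^ d"
  using assms(2)
proof (induct d arbitrary: \<alpha> \<beta> k)
  case 0
  then show ?case
    using four_mul_le_sq[of "\<alpha> []" "\<beta> []" k] by (simp add: aligned_form_def)
next
  case (Suc d)
  define P Q where "P = (int n + 2) ^ d" and "Q = (int n - 2) ^ d"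
  let ?e = "k\<^sup>2 mod 4"
  have hyp: "\<forall>x\<in>cube n d. 0 \<le> \<alpha> (c # x) \<and> 0 \<le> \<beta> (c # x) \<and> \<alpha> (c # x) + \<beta> (c # x) \<le> k"
    if "c \<in> {1..int n}" for c
    using Suc.prems that by (auto simp: cube_Suc)
  have "4 * aligned_form n d (\<lambda>x. \<alpha> (c # x)) (\<lambda>y. \<beta> (c # y)) \<le> k\<^sup>2 * P - ?e * Q"
    if "c \<in> {2..int n - 1}" for c
    using Suc.hyps[OF hyp[of c]] that unfolding P_def Q_def by simp
  from sum_bounded_above[where A = "{2..int n - 1}", OF this] have middle:
    "4 * (\<Sum>c\<in>{2..int n - 1}. aligned_form n d (\<lambda>x. \<alpha> (c # x)) (\<lambda>y. \<beta> (c # y)))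
      \<le> (int n - 2) * (k\<^sup>2 * P - ?e * Q)"
    using assms(1) by (simp add: sum_distrib_left)
  \<comment> \<open>merging the extreme values 1 and n of the first coordinate doubles k\<close>
  have "\<forall>x\<in>cube n d. 0 \<le> \<alpha> (1 # x) + \<alpha> (int n # x) \<and> 0 \<le> \<beta> (1 # x) + \<beta> (int n # x)
      \<and> \<alpha> (1 # x) + \<alpha> (int n # x) + (\<beta> (1 # x) + \<beta> (int n # x)) \<le> 2 * k"
    using hyp[of 1] hyp[of "int n"] assms(1) by force
  from Suc.hyps[OF this] have extremes:
    "4 * aligned_form n d (\<lambda>x. \<alpha> (1 # x) + \<alpha> (int n # x)) (\<lambda>y. \<beta> (1 # y) + \<beta> (int n # y))
      \<le> 4 * k\<^sup>2 * P"
    by (simp add: P_def power_mult_distrib)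
  have "(int n - 2) * (k\<^sup>2 * P - ?e * Q) + 4 * k\<^sup>2 * P + ?e * (int n - 2) ^ Suc d =
      k\<^sup>2 * (int n + 2) ^ Suc d"
    by (simp add: P_def Q_def algebra_simps)
  with middle extremes show ?case
    unfolding aligned_form_Suc[OF assms(1)] distrib_left by linarith
qed

section \<open>Binary antipalindromes\<close>

locale binary_antipalindrome =
  fixes w :: "'a list"
  assumes length_ge_2: "length w \<ge> 2"
    and card_set: "card (set w) = 2"
    and mirror_ne: "\<forall>i<length w. w ! i \<noteq> w ! (length w - 1 - i)"
begin

abbreviation n :: nat where "n \<equiv> length w"

lemma w_not_Nil: "w \<noteq> []"
  using length_ge_2 by auto

lemma first_ne_last: "w ! 0 \<noteq> w ! (n - 1)"
  using mirror_ne length_ge_2 by (metis diff_zero zero_less_numeral order_less_le_trans)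

lemma set_eq_first_last: "set w = {w ! 0, w ! (n - 1)}"
proof (rule card_subset_eq[symmetric])
  show "{w ! 0, w ! (n - 1)} \<subseteq> set w"
    using w_not_Nil by simp
  show "card {w ! 0, w ! (n - 1)} = card (set w)"
    using first_ne_last card_set by simp
qed simp

lemma letter_eq_iff: "x \<in> set w \<Longrightarrow> y \<in> set w \<Longrightarrow> x = y \<longleftrightarrow> (x = w ! 0 \<longleftrightarrow> y = w ! 0)"
  using set_eq_first_last first_ne_last by auto

lemma mirror_eq_first_iff: "t < n \<Longrightarrow> w ! (n - 1 - t) = w ! 0 \<longleftrightarrow> w ! t \<noteq> w ! 0"
  using letter_eq_iff[of "w ! t" "w ! (n - 1 - t)"] mirror_ne by auto

(* The letter at coordinate value y \<in> {1..n} is w ! (y - 1). *)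

definition letter_bit :: "int \<Rightarrow> nat" where
  "letter_bit y = (if w ! (nat y - 1) = w ! 0 then 0 else 1)"

definition parity_grid :: "int list \<Rightarrow> 'a" where
  "parity_grid x = (if even (sum_list (map letter_bit x)) then w ! 0 else w ! (n - 1))"

lemma letter_bit_Suc: "letter_bit (int t + 1) = (if w ! t = w ! 0 then 0 else 1)"
proof -
  have "nat (int t + 1) - 1 = t"
    by simp
  then show ?thesis
    by (simp add: letter_bit_def)
qed

lemma even_letter_bit_step:
  assumes "line_coord n c e" and "t < n"
  shows "even (letter_bit (c + int t * e)) \<longleftrightarrow>
    even (letter_bit c + (if e = 0 then 0 else letter_bit (int t + 1)))"
proof -
  consider "e = 0" | "e = 1" "c = 1" | "e = -1" "c = int n"
    using assms(1) by (auto simp: line_coord_def)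
  then show ?thesis
  proof cases
    case 2
    then show ?thesis
      by (simp add: letter_bit_def add.commute)
  next
    case 3
    \<comment> \<open>a downward coordinate reads the mirror image of \<open>w\<close>, which is the complement of \<open>w\<close>\<close>
    have "nat (int n - int t) - 1 = n - 1 - t"
      using assms(2) by simp
    then have "letter_bit (c + int t * e) = (if w ! (n - 1 - t) = w ! 0 then 0 else 1)"
      using 3 by (simp add: letter_bit_def)
    moreover have "letter_bit c = 1"
      using 3 first_ne_last by (simp add: letter_bit_def)
    ultimately show ?thesis
      using 3 mirror_eq_first_iff[OF assms(2)] by (simp add: letter_bit_Suc)
  qed simp
qed

lemma even_letter_bits_lpt:
  assumes "list_all2 (line_coord n) p v" and "t < n"
  shows "even (sum_list (map letter_bit (lpt p v t))) \<longleftrightarrow>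
    even (sum_list (map letter_bit p) + num_moving v * letter_bit (int t + 1))"
  using assms(1)
proof (induct rule: list_all2_induct)
  case (Cons c p e v)
  then show ?case
    using even_letter_bit_step[OF Cons(1) assms(2)] by (cases "e = 0") (auto simp: num_moving_def)
qed (simp add: num_moving_def)

lemma line_word_parity_grid:
  assumes "list_all2 (line_coord n) p v" and "odd (num_moving v)"
  shows "line_word parity_grid n p v = w \<or> rev (line_word parity_grid n p v) = w"
proof -
  define K where "K = sum_list (map letter_bit p)"
  have in_set: "parity_grid x \<in> set w" for x
    using set_eq_first_last by (simp add: parity_grid_def)
  have key: "parity_grid (lpt p v t) = w ! t \<longleftrightarrow> even K" if "t < n" for t
  proof -
    have "parity_grid (lpt p v t) = w ! 0 \<longleftrightarrow> even (K + num_moving v * letter_bit (int t + 1))"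
      using even_letter_bits_lpt[OF assms(1) that] first_ne_last by (simp add: parity_grid_def K_def)
    then show ?thesis
      using letter_eq_iff[OF in_set nth_mem[OF that]] assms(2) by (auto simp: letter_bit_Suc)
  qed
  show ?thesis
  proof (cases "even K")
    case True
    then have "line_word parity_grid n p v = w"
      using key by (intro nth_equalityI) (simp_all add: nth_line_word)
    then show ?thesis ..
  next
    case False
    have "parity_grid (lpt p v (n - 1 - t)) = w ! t" if "t < n" for t
    proof -
      have "parity_grid (lpt p v (n - 1 - t)) \<noteq> w ! (n - 1 - t)"
        using key[of "n - 1 - t"] False that by simp
      moreover have "w ! t \<noteq> w ! (n - 1 - t)"
        using mirror_ne that by simp
      ultimately show ?thesis
        using letter_eq_iff[OF in_set, of "w ! t"] letter_eq_iff[OF in_set, of "w ! (n - 1 - t)"]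
          letter_eq_iff[of "w ! t" "w ! (n - 1 - t)"] that by auto
    qed
    then have "rev (line_word parity_grid n p v) = w"
      by (intro nth_equalityI) (simp_all add: nth_line_word rev_nth)
    then show ?thesis ..
  qed
qed

lemma card_odd_canon_pairs_le: "card (odd_canon_pairs n d) \<le> f_grid w parity_grid d"
proof -
  let ?line = "\<lambda>(p, v). line_set n p v"
  have valid: "odd_canon_pairs n d \<subseteq> {(p, v). valid_line n d p v \<and> canon v}"
    using odd_canon_pairs_valid_line[OF length_ge_2] by auto
  have "?line ` odd_canon_pairs n d \<subseteq> lines_containing w parity_grid d"
  proof clarify
    fix p v assume "(p, v) \<in> odd_canon_pairs n d"
    then show "line_set n p v \<in> lines_containing w parity_grid d"
      using odd_canon_pairs_valid_line[OF length_ge_2] mem_odd_canon_pairsD line_word_parity_grid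
      unfolding lines_containing_def by blast
  qed
  then have "card (?line ` odd_canon_pairs n d) \<le> f_grid w parity_grid d"
    unfolding f_grid_def by (intro card_mono finite_lines_containing)
  moreover have "inj_on ?line (odd_canon_pairs n d)"
    using inj_on_subset[OF inj_on_line_set[OF length_ge_2] valid] .
  ultimately show ?thesis
    by (simp add: card_image)
qed

definition endpoint_pairs :: "(int list \<Rightarrow> 'a) \<Rightarrow> nat \<Rightarrow> (int list \<times> int list) set" where
  "endpoint_pairs G d = {(x, y). x \<in> cube n d \<and> y \<in> cube n d \<and> aligned (int n) x y
    \<and> G x = w ! 0 \<and> G y = w ! (n - 1)}"

lemma finite_endpoint_pairs: "finite (endpoint_pairs G d)"
  by (rule finite_subset[of _ "cube n d \<times> cube n d"]) (auto simp: endpoint_pairs_def finite_cube)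

lemma lines_containing_subset:
  "lines_containing w G d \<subseteq> (\<lambda>(x, y). line_through n x y) ` endpoint_pairs G d"
proof
  fix L assume "L \<in> lines_containing w G d"
  then obtain p v where V: "valid_line n d p v" and L: "L = line_set n p v"
    and W: "line_word G n p v = w \<or> rev (line_word G n p v) = w"
    unfolding lines_containing_def by blast
  define q where "q = lpt p v (n - 1)"
  have cube: "p \<in> cube n d" "q \<in> cube n d"
    using V length_ge_2 by (auto simp: valid_line_def q_def)
  have ends: "line_word G n p v ! 0 = G p" "line_word G n p v ! (n - 1) = G q"
    using V length_ge_2 w_not_Nil by (simp_all add: nth_line_word q_def valid_line_iff lpt_0)
  note aligned = aligned_endpoints[OF length_ge_2 V, folded q_def]
  note through = line_through_endpoints[OF length_ge_2 V, folded q_def]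
  from W have "(p, q) \<in> endpoint_pairs G d \<and> L = line_through n p q
      \<or> (q, p) \<in> endpoint_pairs G d \<and> L = line_through n q p"
  proof
    assume "line_word G n p v = w"
    then show ?thesis
      using ends cube aligned through L by (auto simp: endpoint_pairs_def)
  next
    assume r: "rev (line_word G n p v) = w"
    have "line_word G n p v \<noteq> []"
      using w_not_Nil by (metis length_line_word length_0_conv)
    then have "w ! 0 = G q" "w ! (n - 1) = G p"
      using arg_cong[OF r, of hd] arg_cong[OF r, of last] ends w_not_Nil
      by (simp_all add: hd_rev last_rev hd_conv_nth last_conv_nth)
    then show ?thesis
      using cube aligned through L by (auto simp: endpoint_pairs_def)
  qed
  then show "L \<in> (\<lambda>(x, y). line_through n x y) ` endpoint_pairs G d"
    by force
qed

lemma card_endpoint_pairs: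
  "int (card (endpoint_pairs G d)) =
    aligned_form n d (\<lambda>x. if G x = w ! 0 then 1 else 0) (\<lambda>y. if G y = w ! (n - 1) then 1 else 0)"
proof -
  define P where "P x y \<longleftrightarrow> aligned (int n) x y \<and> G x = w ! 0 \<and> G y = w ! (n - 1)" for x y
  have "endpoint_pairs G d = {z \<in> cube n d \<times> cube n d. P (fst z) (snd z)}"
    by (auto simp: endpoint_pairs_def P_def)
  then have "int (card (endpoint_pairs G d)) =
      (\<Sum>z\<in>cube n d \<times> cube n d. if P (fst z) (snd z) then 1 else 0)"
    by (simp add: sum.inter_filter[symmetric] finite_cube)
  also have "\<dots> = aligned_form n d (\<lambda>x. if G x = w ! 0 then 1 else 0) (\<lambda>y. if G y = w ! (n - 1) then 1 else 0)"
    unfolding aligned_form_def sum.cartesian_product by (intro sum.cong) (auto simp: P_def)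
  finally show ?thesis .
qed

lemma four_f_grid_le: "4 * int (f_grid w G d) \<le> (int n + 2) ^ d - (int n - 2) ^ d"
proof -
  have "f_grid w G d \<le> card ((\<lambda>(x, y). line_through n x y) ` endpoint_pairs G d)"
    unfolding f_grid_def
    by (intro card_mono finite_imageI finite_endpoint_pairs lines_containing_subset)
  also have "\<dots> \<le> card (endpoint_pairs G d)"
    by (intro card_image_le finite_endpoint_pairs)
  finally have "f_grid w G d \<le> card (endpoint_pairs G d)" .
  moreover have "4 * int (card (endpoint_pairs G d)) + (int n - 2) ^ d \<le> (int n + 2) ^ d"
    using aligned_form_bound[OF length_ge_2, of d _ _ 1] first_ne_last
    by (simp add: card_endpoint_pairs)
  ultimately show ?thesis
    by linarith
qed

end

theorem theorem7:
  fixes w :: "'a list" and d :: nat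
  assumes "length w \<ge> 2"
    and "card (set w) = 2"
    and "\<forall>i<length w. w ! i \<noteq> w ! (length w - 1 - i)"
    and "d \<ge> 1"
  shows "real (f_max w d) = ((real (length w) + 2) ^ d - (real (length w) - 2) ^ d) / 4"
proof -
  interpret binary_antipalindrome w
    using assms(1-3) by unfold_locales
  let ?N = "card (odd_canon_pairs (length w) d)"
  have card: "4 * int ?N = (int (length w) + 2) ^ d - (int (length w) - 2) ^ d"
    by (rule four_card_odd_canon_pairs)
  have "f_max w d = ?N"
  proof (rule f_max_eqI)
    show "f_grid w G d \<le> ?N" for G
      using four_f_grid_le[of G d] card by linarith
    then show "f_grid w parity_grid d = ?N"
      using card_odd_canon_pairs_le[of d] by (simp add: antisym)
  qed
  then show ?thesis
    using arg_cong[OF card, of real_of_int] by simp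
qed

end
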